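(* Let $a\ge0$. For $n\ge0$ and $m\le a+n$, let $\lambda_n=(m,a+n-m)$ and $\mu_n=(1,\dots,1,n)$ (with $a$ entries equal to $1$) be compositions of $a+n$, and let $\mathscr{D}_{\mu_n,\lambda_n}$ be the set of minimal-length representatives of the double cosets $\mathfrak{S}_{\mu_n}\backslash\mathfrak{S}_{a+n}/\mathfrak{S}_{\lambda_n}$. Then, regarding $\mathfrak{S}_{a+n}\subseteq\mathfrak{S}_{a+n+1}$ in the standard way, $\mathscr{D}_{\mu_n,\lambda_n}\subseteq\mathscr{D}_{\mu_{n+1},\lambda_{n+1}}$, and for $n\ge m$ the set $\mathscr{D}_{\mu_n,\lambda_n}$ is independent of $n$.
   Context: For a composition $\nu=(\nu_1,\dots,\nu_r)$ of $N$, the standard Young subgroup $\mathfrak{S}_\nu\subseteq\mathfrak{S}_N$ is $\mathfrak{S}_{\{1,\dots,\nu_1\}}\times\mathfrak{S}_{\{\nu_1+1,\dots,\nu_1+\nu_2\}}\times\cdots$. Length is with respect to the simple transpositions $s_i=(i,i+1)$. *)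

theory Defs
  imports "HOL-Combinatorics.Combinatorics"
begin

text \<open>Permutations of {1..N} are functions nat => nat that permute {1..N}.
  The simple transposition s_i is transpose i (i+1).\<close>

definition simple_word :: "nat list \<Rightarrow> (nat \<Rightarrow> nat)" where
  "simple_word is = foldr (\<lambda>i f. transpose i (Suc i) \<circ> f) is id"

definition perm_len :: "nat \<Rightarrow> (nat \<Rightarrow> nat) \<Rightarrow> nat" where
  "perm_len N w = (LEAST k. \<exists>is. length is = k \<and> (\<forall>i\<in>set is. 1 \<le> i \<and> i < N)
                                   \<and> w = simple_word is)"

text \<open>The i-th block (0-based) of a composition.\<close>
definition block :: "nat list \<Rightarrow> nat \<Rightarrow> nat set" where
  "block \<nu> i = {sum_list (take i \<nu>) + 1 .. sum_list (take (Suc i) \<nu>)}"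

definition young :: "nat \<Rightarrow> nat list \<Rightarrow> (nat \<Rightarrow> nat) set" where
  "young N \<nu> = {w. w permutes {1..N} \<and> (\<forall>i<length \<nu>. w ` block \<nu> i = block \<nu> i)}"

definition minreps :: "nat \<Rightarrow> nat list \<Rightarrow> nat list \<Rightarrow> (nat \<Rightarrow> nat) set" where
  "minreps N mu lam = {w. w permutes {1..N} \<and>
      (\<forall>u\<in>young N mu. \<forall>v\<in>young N lam. perm_len N w \<le> perm_len N (u \<circ> w \<circ> v))}"

definition mu_comp :: "nat \<Rightarrow> nat \<Rightarrow> nat list" where
  "mu_comp a n = replicate a 1 @ [n]"

definition lambda_comp :: "nat \<Rightarrow> nat \<Rightarrow> nat \<Rightarrow> nat list" where
  "lambda_comp a n m = [m, a + n - m]"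

end

theory Submission
  imports Defs
begin

text \<open>The Coxeter length of a permutation is its number of inversions. Hence w is of minimal
  length in its double coset iff w is increasing on every block of lam and w\<inverse> on every
  block of mu: a violation yields an adjacent descent inside a block, which a simple
  transposition from the Young subgroup removes, and conversely the inversions of w embed
  into those of every u w v. For mu_n and lam_n this says that w increases on {1..m} and
  on {m+1..a+n} while w\<inverse> increases on {a+1..a+n}. These conditions survive adding
  the fixed point a+n+1, and for n \<ge> m they force w (a+n+1) = a+n+1, since w (a+n+1)
  exceeds a and w\<inverse> is increasing on the values above a.\<close>

section \<open>Inversions and Coxeter length\<close>

definition inversions :: "nat \<Rightarrow> (nat \<Rightarrow> nat) \<Rightarrow> (nat \<times> nat) set" where
  "inversions N w = {(p, q). p \<in> {1..N} \<and> q \<in> {1..N} \<and> p < q \<and> w q < w p}"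

lemma finite_inversions [simp]: "finite (inversions N w)"
  by (rule finite_subset[of _ "{1..N} \<times> {1..N}"]) (auto simp: inversions_def)

lemma adjacent_descent:
  fixes f :: "nat \<Rightarrow> 'a::linorder"
  assumes "p < q" "f q < f p"
  obtains i where "p \<le> i" "i < q" "f (Suc i) < f i"
proof (rule ccontr)
  assume "\<not> thesis"
  then have "\<And>i. i \<in> {p..<q} \<Longrightarrow> f i \<le> f (Suc i)"
    using that by (meson atLeastLessThan_iff not_le)
  then have "f p \<le> f q"
    using lift_Suc_mono_le_ivl[of "{p..<q}" f p q] assms(1) by simp
  with assms(2) show False by simp
qed

lemma strict_mono_on_atLeastAtMost_add_le:
  fixes f :: "nat \<Rightarrow> nat"
  assumes "strict_mono_on {k..n} f" "k \<le> n"
  shows "f k + (n - k) \<le> f n"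
  using assms(2,1)
proof (induction n rule: dec_induct)
  case base
  then show ?case by simp
next
  case (step n)
  have "f n < f (Suc n)"
    using step by (intro strict_mono_onD[OF step.prems]) auto
  moreover have "strict_mono_on {k..n} f"
    using step.prems by (rule monotone_on_subset) auto
  ultimately show ?case
    using step by simp
qed

lemma strict_mono_on_permutes_eq_id:
  fixes f :: "nat \<Rightarrow> nat"
  assumes f: "f permutes {1..N}" and mono: "strict_mono_on {1..N} f"
  shows "f = id"
proof
  fix x
  show "f x = id x"
  proof (cases "x \<in> {1..N}")
    case True
    have "1 \<in> {1..N}" "N \<in> {1..N}"
      using True by auto
    then have "1 \<le> f 1" "f N \<le> N"
      using permutes_in_image[OF f] by auto
    moreover have "f 1 + (x - 1) \<le> f x"
      using True by (intro strict_mono_on_atLeastAtMost_add_le monotone_on_subset[OF mono]) auto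
    moreover have "f x + (N - x) \<le> f N"
      using True by (intro strict_mono_on_atLeastAtMost_add_le monotone_on_subset[OF mono]) auto
    ultimately show ?thesis
      using True by simp
  next
    case False
    then show ?thesis
      using permutes_not_in[OF f] by simp
  qed
qed

lemma strict_mono_on_extend_fixed_point:
  fixes f :: "nat \<Rightarrow> nat"
  assumes f: "f permutes {1..N}" and mono: "strict_mono_on {k..N} f"
  shows "strict_mono_on {k..Suc N} f"
proof (rule strict_mono_onI)
  fix r s
  assume rs: "r \<in> {k..Suc N}" "s \<in> {k..Suc N}" "r < s"
  show "f r < f s"
  proof (cases "s = Suc N")
    case True
    have "f r \<le> N"
      using f rs True permutes_in_image[OF f, of r] permutes_not_in[OF f, of r]
      by (cases "r \<in> {1..N}") auto
    then show ?thesis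
      using True permutes_not_in[OF f, of s] by simp
  next
    case False
    then show ?thesis
      using rs by (intro strict_mono_onD[OF mono]) auto
  qed
qed

lemma inversions_empty_imp_id:
  assumes f: "f permutes {1..N}" and "inversions N f = {}"
  shows "f = id"
proof (rule strict_mono_on_permutes_eq_id[OF f], rule strict_mono_onI)
  fix p q assume pq: "p \<in> {1..N}" "q \<in> {1..N}" "p < q"
  then have "\<not> f q < f p" "f p \<noteq> f q"
    using assms(2) permutes_inj[OF f] by (auto simp: inversions_def dest: injD)
  then show "f p < f q" by simp
qed

lemma inversions_transpose_left:
  assumes f: "f permutes {1..N}" and j: "1 \<le> j" "j < N"
    and descent: "inv f (Suc j) < inv f j"
  shows "inversions N (transpose j (Suc j) \<circ> f) = inversions N f - {(inv f (Suc j), inv f j)}"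
    and "(inv f (Suc j), inv f j) \<in> inversions N f"
proof -
  let ?P = "inv f j" and ?Q = "inv f (Suc j)"
  have fP: "f ?P = j" and fQ: "f ?Q = Suc j"
    using permutes_inverses[OF f] by auto
  have PQ: "?P \<in> {1..N}" "?Q \<in> {1..N}"
    using j permutes_in_image[OF permutes_inv[OF f]] by auto
  show "(?Q, ?P) \<in> inversions N f"
    using PQ descent fP fQ by (auto simp: inversions_def)
  show "inversions N (transpose j (Suc j) \<circ> f) = inversions N f - {(?Q, ?P)}"
  proof (rule set_eqI, clarify)
    fix p q
    show "(p, q) \<in> inversions N (transpose j (Suc j) \<circ> f) \<longleftrightarrow> (p, q) \<in> inversions N f - {(?Q, ?P)}"
    proof (cases "(p, q) = (?Q, ?P)")
      case True
      then show ?thesis using fP fQ by (auto simp: inversions_def)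
    next
      case False
      have "p = ?P \<longleftrightarrow> f p = j" "q = ?P \<longleftrightarrow> f q = j" "p = ?Q \<longleftrightarrow> f p = Suc j" "q = ?Q \<longleftrightarrow> f q = Suc j"
        using permutes_inv_eq[OF f] by metis+
      with False descent show ?thesis
        unfolding inversions_def transpose_def by (auto dest: injD[OF permutes_inj[OF f]])
    qed
  qed
qed

lemma card_inversions_transpose_left_descent:
  assumes "f permutes {1..N}" "1 \<le> j" "j < N" "inv f (Suc j) < inv f j"
  shows "Suc (card (inversions N (transpose j (Suc j) \<circ> f))) = card (inversions N f)"
  using inversions_transpose_left[OF assms] card_Suc_Diff1[OF finite_inversions] by metis

lemma card_inversions_transpose_left_le:
  assumes f: "f permutes {1..N}" and j: "1 \<le> j" "j < N"
  shows "card (inversions N (transpose j (Suc j) \<circ> f)) \<le> Suc (card (inversions N f))"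
proof (cases "inv f (Suc j) < inv f j")
  case True
  then show ?thesis
    using card_inversions_transpose_left_descent[OF f j] by simp
next
  case False
  let ?g = "transpose j (Suc j) \<circ> f"
  have g: "?g permutes {1..N}"
    using j by (intro permutes_compose[OF f] permutes_swap_id) auto
  have "inv f j \<noteq> inv f (Suc j)"
    using permutes_inv_eq[OF f] by (metis n_not_Suc_n)
  with False have "inv ?g (Suc j) < inv ?g j"
    by (simp add: o_inv_distrib[OF bij_transpose permutes_bij[OF f]])
  from card_inversions_transpose_left_descent[OF g j this] show ?thesis
    by (simp add: comp_assoc[symmetric])
qed

lemma card_inversions_inv:
  assumes f: "f permutes {1..N}"
  shows "card (inversions N (inv f)) = card (inversions N f)"
proof -
  have "bij_betw (\<lambda>(p, q). (f q, f p)) (inversions N f) (inversions N (inv f))"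
    by (rule bij_betw_byWitness[where f' = "\<lambda>(x, y). (inv f y, inv f x)"])
      (use permutes_in_image[OF f] permutes_in_image[OF permutes_inv[OF f]]
           permutes_inverses[OF f] in \<open>auto simp: inversions_def\<close>)
  then show ?thesis
    by (simp add: bij_betw_same_card)
qed

lemma simple_word_Cons: "simple_word (i # is) = transpose i (Suc i) \<circ> simple_word is"
  by (simp add: simple_word_def)

lemma simple_word_permutes_card_inversions_le:
  assumes "\<forall>i\<in>set is. 1 \<le> i \<and> i < N"
  shows "simple_word is permutes {1..N} \<and> card (inversions N (simple_word is)) \<le> length is"
  using assms
proof (induction "is")
  case Nil
  have "inversions N (\<lambda>x. x) = {}"
    by (auto simp: inversions_def)
  then show ?case
    by (simp add: simple_word_def permutes_id[unfolded id_def])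
next
  case (Cons i "is")
  then have IH: "simple_word is permutes {1..N}" "card (inversions N (simple_word is)) \<le> length is"
    and i: "1 \<le> i" "i < N" by auto
  have s: "transpose i (Suc i) permutes {1..N}"
    using i by (intro permutes_swap_id) auto
  have "card (inversions N (transpose i (Suc i) \<circ> simple_word is)) \<le> length (i # is)"
    using card_inversions_transpose_left_le[OF IH(1) i] IH(2) by simp
  then show ?case
    unfolding simple_word_Cons using permutes_compose[OF IH(1) s] by blast
qed

lemma ex_simple_word_card_inversions:
  "f permutes {1..N} \<Longrightarrow> card (inversions N f) = k \<Longrightarrow>
   \<exists>is. length is = k \<and> (\<forall>i\<in>set is. 1 \<le> i \<and> i < N) \<and> f = simple_word is"
proof (induction k arbitrary: f)
  case 0
  then have "f = id"
    using inversions_empty_imp_id by simp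
  then show ?case
    by (intro exI[of _ "[]"]) (simp add: simple_word_def)
next
  case (Suc k)
  note f = Suc.prems(1)
  have "inversions N f \<noteq> {}"
    using Suc.prems(2) by auto
  then obtain p q where pq: "p \<in> {1..N}" "q \<in> {1..N}" "p < q" "f q < f p"
    by (auto simp: inversions_def)
  have "inv f (f p) < inv f (f q)"
    using pq(3) permutes_inverses[OF f] by simp
  then obtain j where j: "f q \<le> j" "j < f p" "inv f (Suc j) < inv f j"
    using adjacent_descent[of "f q" "f p" "inv f"] pq(4) by blast
  have "f q \<in> {1..N}" "f p \<in> {1..N}"
    using permutes_in_image[OF f] pq(1,2) by auto
  then have jN: "1 \<le> j" "j < N"
    using j by auto
  let ?s = "transpose j (Suc j)"
  have g: "?s \<circ> f permutes {1..N}"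
    using jN by (intro permutes_compose[OF f] permutes_swap_id) auto
  have "card (inversions N (?s \<circ> f)) = k"
    using card_inversions_transpose_left_descent[OF f jN j(3)] Suc.prems(2) by simp
  then obtain "is" where "is": "length is = k" "\<forall>i\<in>set is. 1 \<le> i \<and> i < N" "?s \<circ> f = simple_word is"
    using Suc.IH[OF g] by blast
  have "f = ?s \<circ> (?s \<circ> f)"
    by (simp add: comp_assoc[symmetric])
  then have "f = simple_word (j # is)"
    using "is"(3) by (simp add: simple_word_Cons)
  then show ?case
    using "is" jN by (intro exI[of _ "j # is"]) auto
qed

theorem perm_len_eq_card_inversions:
  assumes "f permutes {1..N}"
  shows "perm_len N f = card (inversions N f)"
  unfolding perm_len_def
proof (rule Least_equality)
  show "\<exists>is. length is = card (inversions N f) \<and> (\<forall>i\<in>set is. 1 \<le> i \<and> i < N) \<and> f = simple_word is"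
    using ex_simple_word_card_inversions[OF assms refl] .
next
  fix k
  assume "\<exists>is. length is = k \<and> (\<forall>i\<in>set is. 1 \<le> i \<and> i < N) \<and> f = simple_word is"
  then show "card (inversions N f) \<le> k"
    using simple_word_permutes_card_inversions_le by blast
qed

lemma perm_len_transpose_left_less:
  assumes f: "f permutes {1..N}" and j: "1 \<le> j" "j < N" and "inv f (Suc j) < inv f j"
  shows "perm_len N (transpose j (Suc j) \<circ> f) < perm_len N f"
proof -
  have "transpose j (Suc j) \<circ> f permutes {1..N}"
    using j by (intro permutes_compose[OF f] permutes_swap_id) auto
  then show ?thesis
    using card_inversions_transpose_left_descent[OF assms] perm_len_eq_card_inversions f by simp
qed

lemma perm_len_transpose_right_less:
  assumes f: "f permutes {1..N}" and i: "1 \<le> i" "i < N" and descent: "f (Suc i) < f i"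
  shows "perm_len N (f \<circ> transpose i (Suc i)) < perm_len N f"
proof -
  let ?s = "transpose i (Suc i)"
  have s: "?s permutes {1..N}"
    using i by (intro permutes_swap_id) auto
  have g: "inv f permutes {1..N}"
    using permutes_inv[OF f] .
  have inv_fs: "inv (f \<circ> ?s) = ?s \<circ> inv f"
    using o_inv_distrib[OF permutes_bij[OF f] bij_transpose] by simp
  have "inv (inv f) (Suc i) < inv (inv f) i"
    using descent permutes_inv_inv[OF f] by simp
  then have "card (inversions N (inv (f \<circ> ?s))) < card (inversions N (inv f))"
    using card_inversions_transpose_left_descent[OF g i] inv_fs by simp
  then show ?thesis
    using card_inversions_inv[OF f] card_inversions_inv[OF permutes_compose[OF s f]]
      perm_len_eq_card_inversions[OF f] perm_len_eq_card_inversions[OF permutes_compose[OF s f]]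
    by simp
qed

section \<open>Minimal double coset representatives\<close>

lemma sum_list_take_mono:
  fixes \<nu> :: "nat list"
  assumes "k \<le> l"
  shows "sum_list (take k \<nu>) \<le> sum_list (take l \<nu>)"
  using take_add[of k "l - k" \<nu>] assms by simp

lemma sum_list_take_le: "sum_list (take k \<nu>) \<le> sum_list (\<nu> :: nat list)"
  by (metis append_take_drop_id sum_list_append le_add1)

lemma block_subset: "block \<nu> k \<subseteq> {1..sum_list \<nu>}"
  using sum_list_take_le[of "Suc k" \<nu>] by (auto simp: block_def)

lemma block_less:
  assumes "k < l" "x \<in> block \<nu> k" "y \<in> block \<nu> l"
  shows "x < y"
  using assms sum_list_take_mono[of "Suc k" l \<nu>] by (auto simp: block_def)

lemma ex_block:
  assumes "x \<in> {1..sum_list \<nu>}"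
  obtains k where "k < length \<nu>" "x \<in> block \<nu> k"
proof -
  define k where "k = (LEAST k. x \<le> sum_list (take (Suc k) \<nu>))"
  have "\<nu> \<noteq> []"
    using assms by auto
  then have "x \<le> sum_list (take (Suc (length \<nu> - 1)) \<nu>)"
    using assms by simp
  then have "k \<le> length \<nu> - 1" and upper: "x \<le> sum_list (take (Suc k) \<nu>)"
    unfolding k_def by (fact Least_le, fact LeastI)
  moreover have "sum_list (take k \<nu>) < x"
  proof (cases k)
    case 0
    then show ?thesis using assms by simp
  next
    case (Suc k')
    then show ?thesis
      using not_less_Least[of k' "\<lambda>k. x \<le> sum_list (take (Suc k) \<nu>)"] k_def by simp
  qed
  moreover have "k < length \<nu>"
    using \<open>k \<le> length \<nu> - 1\<close> \<open>\<nu> \<noteq> []\<close> by (cases \<nu>) auto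
  ultimately show ?thesis
    using that by (simp add: block_def)
qed

lemma young_block_iff:
  assumes "v \<in> young N \<nu>" "k < length \<nu>"
  shows "v x \<in> block \<nu> k \<longleftrightarrow> x \<in> block \<nu> k"
proof -
  have "inj v" "v ` block \<nu> k = block \<nu> k"
    using assms permutes_inj by (auto simp: young_def)
  then show ?thesis
    by (metis inj_image_mem_iff)
qed

lemma inv_young:
  assumes "v \<in> young N \<nu>"
  shows "inv v \<in> young N \<nu>"
proof -
  have v: "v permutes {1..N}" "\<And>k. k < length \<nu> \<Longrightarrow> v ` block \<nu> k = block \<nu> k"
    using assms by (auto simp: young_def)
  have "inv v ` block \<nu> k = block \<nu> k" if "k < length \<nu>" for k
    using image_inv_f_f[OF permutes_inj[OF v(1)], of "block \<nu> k"] v(2)[OF that] by simp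
  then show ?thesis
    using permutes_inv[OF v(1)] by (simp add: young_def)
qed

lemma id_young: "id \<in> young N \<nu>"
  by (simp add: young_def permutes_id)

lemma transpose_young:
  assumes "sum_list \<nu> \<le> N" "k < length \<nu>" "i \<in> block \<nu> k" "Suc i \<in> block \<nu> k"
  shows "transpose i (Suc i) \<in> young N \<nu>"
proof -
  have "transpose i (Suc i) permutes {1..N}"
    using assms block_subset[of \<nu> k] by (intro permutes_swap_id) auto
  moreover have "transpose i (Suc i) ` block \<nu> l = block \<nu> l" for l
  proof (rule transpose_image_eq)
    show "i \<in> block \<nu> l \<longleftrightarrow> Suc i \<in> block \<nu> l"
      using assms(3,4) block_less
      by (cases k l rule: linorder_cases) fastforce+
  qed
  ultimately show ?thesis
    by (simp add: young_def)
qed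

definition block_increasing :: "nat list \<Rightarrow> (nat \<Rightarrow> nat) \<Rightarrow> bool" where
  "block_increasing \<nu> f \<longleftrightarrow> (\<forall>k<length \<nu>. strict_mono_on (block \<nu> k) f)"

lemma young_less_across_blocks:
  assumes \<nu>: "sum_list \<nu> = N" and g: "g \<in> young N \<nu>" and f: "block_increasing \<nu> f"
    and xy: "x \<in> {1..N}" "y \<in> {1..N}" "x < y" "f y < f x"
  shows "g x < g y"
proof -
  obtain k l where k: "k < length \<nu>" "x \<in> block \<nu> k" and l: "l < length \<nu>" "y \<in> block \<nu> l"
    using ex_block xy(1,2) \<nu> by metis
  have "k \<noteq> l"
  proof
    assume "k = l"
    then have "f x < f y"
      using f k l xy(3) by (auto simp: block_increasing_def intro: strict_mono_onD)
    with xy(4) show False by simp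
  qed
  moreover have "\<not> l < k"
    using block_less[OF _ l(2) k(2)] xy(3) by auto
  ultimately have "k < l" by simp
  then show ?thesis
    using block_less young_block_iff[OF g] k l by blast
qed

lemma not_block_increasing_adjacent_descent:
  assumes "inj f" "\<not> block_increasing \<nu> f"
  obtains k i where "k < length \<nu>" "i \<in> block \<nu> k" "Suc i \<in> block \<nu> k" "f (Suc i) < f i"
proof -
  obtain k x y where k: "k < length \<nu>" and xy: "x \<in> block \<nu> k" "y \<in> block \<nu> k" "x < y"
    and "\<not> f x < f y"
    using assms(2) unfolding block_increasing_def strict_mono_on_def by blast
  then have "f y < f x"
    using injD[OF assms(1), of x y] by (metis linorder_neqE less_irrefl)
  then obtain i where "x \<le> i" "i < y" "f (Suc i) < f i"
    using adjacent_descent xy(3) by blast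
  moreover have "i \<in> block \<nu> k" "Suc i \<in> block \<nu> k"
    using xy calculation by (auto simp: block_def)
  ultimately show ?thesis
    using that k by blast
qed

lemma minreps_block_increasing_right:
  assumes w: "w \<in> minreps N mu lam" and lam: "sum_list lam \<le> N"
  shows "block_increasing lam w"
proof (rule ccontr)
  have wp: "w permutes {1..N}"
    using w by (simp add: minreps_def)
  assume "\<not> block_increasing lam w"
  then obtain k i where k: "k < length lam" and i: "i \<in> block lam k" "Suc i \<in> block lam k"
    and descent: "w (Suc i) < w i"
    using not_block_increasing_adjacent_descent permutes_inj[OF wp] by metis
  have "transpose i (Suc i) \<in> young N lam"
    using transpose_young[OF lam k i] .
  then have "perm_len N w \<le> perm_len N (w \<circ> transpose i (Suc i))"
    using w id_young by (fastforce simp: minreps_def)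
  moreover have "1 \<le> i" "i < N"
    using i block_subset[of lam k] lam by auto
  ultimately show False
    using perm_len_transpose_right_less[OF wp _ _ descent] by fastforce
qed

lemma minreps_block_increasing_left:
  assumes w: "w \<in> minreps N mu lam" and mu: "sum_list mu \<le> N"
  shows "block_increasing mu (inv w)"
proof (rule ccontr)
  have wp: "w permutes {1..N}"
    using w by (simp add: minreps_def)
  assume "\<not> block_increasing mu (inv w)"
  then obtain k j where k: "k < length mu" and j: "j \<in> block mu k" "Suc j \<in> block mu k"
    and descent: "inv w (Suc j) < inv w j"
    using not_block_increasing_adjacent_descent permutes_inj[OF permutes_inv[OF wp]] by metis
  have "transpose j (Suc j) \<in> young N mu"
    using transpose_young[OF mu k j] .
  then have "perm_len N w \<le> perm_len N (transpose j (Suc j) \<circ> w)"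
    using w id_young by (fastforce simp: minreps_def)
  moreover have "1 \<le> j" "j < N"
    using j block_subset[of mu k] mu by auto
  ultimately show False
    using perm_len_transpose_left_less[OF wp _ _ descent] by fastforce
qed

text \<open>An inversion (p, q) of w has p, q in distinct blocks of lam and w q, w p in distinct
  blocks of mu; Young subgroups preserve the order between distinct blocks, so
  (p, q) \<mapsto> (v\<inverse> p, v\<inverse> q) embeds the inversions of w into those of u w v.\<close>
lemma card_inversions_le_double_coset:
  assumes mu: "sum_list mu = N" and lam: "sum_list lam = N" and w: "w permutes {1..N}"
    and right: "block_increasing lam w" and left: "block_increasing mu (inv w)"
    and u: "u \<in> young N mu" and v: "v \<in> young N lam"
  shows "card (inversions N w) \<le> card (inversions N (u \<circ> w \<circ> v))"
proof -
  have vp: "v permutes {1..N}"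
    using v by (simp add: young_def)
  let ?h = "\<lambda>(p, q). (inv v p, inv v q)"
  have "?h (p, q) \<in> inversions N (u \<circ> w \<circ> v)" if "(p, q) \<in> inversions N w" for p q
  proof -
    have pq: "p \<in> {1..N}" "q \<in> {1..N}" "p < q" "w q < w p"
      using that by (auto simp: inversions_def)
    have "inv v p < inv v q"
      using young_less_across_blocks[OF lam inv_young[OF v] right pq] .
    moreover have "u (w q) < u (w p)"
    proof (rule young_less_across_blocks[OF mu u left])
      show "w q \<in> {1..N}" "w p \<in> {1..N}"
        using pq(1,2) permutes_in_image[OF w] by blast+
      show "w q < w p" "inv w (w p) < inv w (w q)"
        using pq permutes_inverses[OF w] by auto
    qed
    moreover have "inv v p \<in> {1..N}" "inv v q \<in> {1..N}"
      using pq(1,2) permutes_in_image[OF permutes_inv[OF vp]] by blast+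
    ultimately show ?thesis
      using permutes_inverses[OF vp] by (simp add: inversions_def)
  qed
  then have "?h ` inversions N w \<subseteq> inversions N (u \<circ> w \<circ> v)"
    by auto
  moreover have "inj_on ?h (inversions N w)"
    using permutes_inj[OF permutes_inv[OF vp]] by (auto simp: inj_on_def dest: injD)
  ultimately show ?thesis
    by (intro card_inj_on_le) auto
qed

theorem minreps_eq_block_increasing:
  assumes mu: "sum_list mu = N" and lam: "sum_list lam = N"
  shows "minreps N mu lam =
    {w. w permutes {1..N} \<and> block_increasing lam w \<and> block_increasing mu (inv w)}"
proof (intro equalityI subsetI)
  fix w
  assume "w \<in> minreps N mu lam"
  then show "w \<in> {w. w permutes {1..N} \<and> block_increasing lam w \<and> block_increasing mu (inv w)}"
    using minreps_block_increasing_left minreps_block_increasing_right mu lam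
    by (simp add: minreps_def)
next
  fix w
  assume "w \<in> {w. w permutes {1..N} \<and> block_increasing lam w \<and> block_increasing mu (inv w)}"
  then have w: "w permutes {1..N}" "block_increasing lam w" "block_increasing mu (inv w)"
    by auto
  have "perm_len N w \<le> perm_len N (u \<circ> w \<circ> v)"
    if u: "u \<in> young N mu" and v: "v \<in> young N lam" for u v
  proof -
    have "u permutes {1..N}" "v permutes {1..N}"
      using u v by (simp_all add: young_def)
    then have "u \<circ> w \<circ> v permutes {1..N}"
      using w(1) by (metis permutes_compose)
    then show ?thesis
      using card_inversions_le_double_coset[OF mu lam w u v] perm_len_eq_card_inversions w(1)
      by simp
  qed
  then show "w \<in> minreps N mu lam"
    using w(1) by (simp add: minreps_def)
qed

section \<open>The compositions mu_comp and lambda_comp\<close>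

lemma sum_list_mu_comp: "sum_list (mu_comp a n) = a + n"
  by (simp add: mu_comp_def sum_list_replicate)

lemma sum_list_lambda_comp: "m \<le> a + n \<Longrightarrow> sum_list (lambda_comp a n m) = a + n"
  by (simp add: lambda_comp_def)

lemma block_mu_comp:
  shows "k < a \<Longrightarrow> block (mu_comp a n) k = {Suc k}"
    and "block (mu_comp a n) a = {Suc a..a + n}"
  by (simp_all add: block_def mu_comp_def sum_list_replicate min_def)

lemma block_increasing_mu_comp:
  "block_increasing (mu_comp a n) f \<longleftrightarrow> strict_mono_on {Suc a..a + n} f"
proof -
  have "strict_mono_on (block (mu_comp a n) k) f" if "k < a" for k
    using that by (simp add: block_mu_comp strict_mono_on_def)
  moreover have "length (mu_comp a n) = Suc a"
    by (simp add: mu_comp_def)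
  ultimately show ?thesis
    by (auto simp: block_increasing_def block_mu_comp less_Suc_eq)
qed

lemma block_increasing_lambda_comp:
  assumes "m \<le> a + n"
  shows "block_increasing (lambda_comp a n m) f \<longleftrightarrow>
    strict_mono_on {1..m} f \<and> strict_mono_on {Suc m..a + n} f"
proof -
  have "block (lambda_comp a n m) 0 = {1..m}" "block (lambda_comp a n m) 1 = {Suc m..a + n}"
    and "length (lambda_comp a n m) = Suc (Suc 0)"
    using assms by (simp_all add: block_def lambda_comp_def)
  then show ?thesis
    by (auto simp: block_increasing_def All_less_Suc)
qed

definition shuffle_reps :: "nat \<Rightarrow> nat \<Rightarrow> nat \<Rightarrow> (nat \<Rightarrow> nat) set" where
  "shuffle_reps N a m = {w. w permutes {1..N} \<and> strict_mono_on {1..m} w \<and>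
     strict_mono_on {Suc m..N} w \<and> strict_mono_on {Suc a..N} (inv w)}"

lemma minreps_mu_lambda_comp:
  assumes "m \<le> a + n"
  shows "minreps (a + n) (mu_comp a n) (lambda_comp a n m) = shuffle_reps (a + n) a m"
  using assms
  by (simp add: minreps_eq_block_increasing sum_list_mu_comp sum_list_lambda_comp
      block_increasing_mu_comp block_increasing_lambda_comp shuffle_reps_def)

lemma shuffle_reps_subset_Suc: "shuffle_reps N a m \<subseteq> shuffle_reps (Suc N) a m"
proof
  fix w
  assume "w \<in> shuffle_reps N a m"
  then have w: "w permutes {1..N}" and "strict_mono_on {1..m} w"
    and "strict_mono_on {Suc m..N} w" "strict_mono_on {Suc a..N} (inv w)"
    by (auto simp: shuffle_reps_def)
  moreover have "w permutes {1..Suc N}"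
    using w by (rule permutes_subset) auto
  ultimately show "w \<in> shuffle_reps (Suc N) a m"
    using strict_mono_on_extend_fixed_point permutes_inv[OF w]
    by (simp add: shuffle_reps_def)
qed

lemma shuffle_reps_fixes_last:
  assumes w: "w \<in> shuffle_reps (Suc N) a m" and "a + m \<le> N"
  shows "w (Suc N) = Suc N"
proof (rule ccontr)
  assume ne: "w (Suc N) \<noteq> Suc N"
  have wp: "w permutes {1..Suc N}" and mono: "strict_mono_on {Suc m..Suc N} w"
    and inv_mono: "strict_mono_on {Suc a..Suc N} (inv w)"
    using w by (auto simp: shuffle_reps_def)
  have "w (Suc m) + (Suc N - Suc m) \<le> w (Suc N)"
    using mono assms(2) by (intro strict_mono_on_atLeastAtMost_add_le) auto
  moreover have "1 \<le> w (Suc m)" "w (Suc N) \<le> Suc N"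
    using assms(2) permutes_in_image[OF wp, of "Suc m"] permutes_in_image[OF wp, of "Suc N"]
    by auto
  ultimately have "w (Suc N) \<in> {Suc a..Suc N}" "w (Suc N) < Suc N"
    using assms(2) ne by auto
  then have "inv w (w (Suc N)) < inv w (Suc N)"
    using assms(2) by (intro strict_mono_onD[OF inv_mono]) auto
  moreover have "inv w (Suc N) \<le> Suc N"
    using permutes_in_image[OF permutes_inv[OF wp], of "Suc N"] by auto
  ultimately show False
    using permutes_inverses(2)[OF wp] by simp
qed

lemma shuffle_reps_Suc_eq:
  assumes "a + m \<le> N"
  shows "shuffle_reps (Suc N) a m = shuffle_reps N a m"
proof
  show "shuffle_reps N a m \<subseteq> shuffle_reps (Suc N) a m"
    by (rule shuffle_reps_subset_Suc)
  show "shuffle_reps (Suc N) a m \<subseteq> shuffle_reps N a m"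
  proof
    fix w
    assume w: "w \<in> shuffle_reps (Suc N) a m"
    then have "w permutes {1..Suc N}"
      by (simp add: shuffle_reps_def)
    then have "w permutes {1..N}"
    proof (rule permutes_superset)
      fix x
      assume "x \<in> {1..Suc N} - {1..N}"
      then have "x = Suc N"
        by (auto simp: le_Suc_eq)
      then show "w x = x"
        using shuffle_reps_fixes_last[OF w assms] by simp
    qed
    moreover have "{Suc m..N} \<subseteq> {Suc m..Suc N}" "{Suc a..N} \<subseteq> {Suc a..Suc N}"
      by auto
    ultimately show "w \<in> shuffle_reps N a m"
      using w by (auto simp: shuffle_reps_def intro: monotone_on_subset)
  qed
qed

lemma shuffle_reps_eq:
  assumes "a + m \<le> N"
  shows "shuffle_reps N a m = shuffle_reps (a + m) a m"
  using assms
proof (induction N rule: dec_induct)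
  case (step N)
  then show ?case
    using shuffle_reps_Suc_eq by simp
qed simp

theorem lemma3p3:
  fixes a m :: nat
  shows "(\<forall>n. m \<le> a + n \<longrightarrow>
           minreps (a + n) (mu_comp a n) (lambda_comp a n m)
             \<subseteq> minreps (a + Suc n) (mu_comp a (Suc n)) (lambda_comp a (Suc n) m))
       \<and> (\<forall>n1 n2. m \<le> n1 \<and> m \<le> n2 \<longrightarrow>
           minreps (a + n1) (mu_comp a n1) (lambda_comp a n1 m)
             = minreps (a + n2) (mu_comp a n2) (lambda_comp a n2 m))"
proof (intro conjI allI impI)
  fix n
  assume "m \<le> a + n"
  then show "minreps (a + n) (mu_comp a n) (lambda_comp a n m)
      \<subseteq> minreps (a + Suc n) (mu_comp a (Suc n)) (lambda_comp a (Suc n) m)"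
    using minreps_mu_lambda_comp[of m a n] minreps_mu_lambda_comp[of m a "Suc n"]
      shuffle_reps_subset_Suc[of "a + n" a m] by simp
next
  fix n1 n2
  assume "m \<le> n1 \<and> m \<le> n2"
  then show "minreps (a + n1) (mu_comp a n1) (lambda_comp a n1 m)
      = minreps (a + n2) (mu_comp a n2) (lambda_comp a n2 m)"
    by (simp add: minreps_mu_lambda_comp shuffle_reps_eq[of a m "a + n1"] shuffle_reps_eq[of a m "a + n2"])
qed

end
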